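(* Let $P$ be a finite sequence of nonnegative integers. Then $P$ is mirror bigraphic if and only if the pair $(P,P)$ is bigraphic.
   Context: For sequences $P,Q$ of nonnegative integers, the pair $(P,Q)$ is bigraphic if there is a bipartite graph $G=(V_1\cup V_2,E)$ (with stable sets $V_1,V_2$) whose vertices in $V_1$ have degrees equal to the elements of $P$ and whose vertices in $V_2$ have degrees equal to the elements of $Q$; such $G$ realizes $(P,Q)$. A bipartite graph $G=(V_1\cup V_2,E)$ is mirror if there is a bijection $\varphi:V_1\to V_2$ with $u\varphi(v)\in E \iff \varphi(u)v\in E$ for all $u,v\in V_1$. A sequence $P$ is mirror bigraphic if $(P,P)$ is bigraphic and some mirror bipartite graph realizes $(P,P)$. *)

theory Defs
  imports Main "HOL-Library.Multiset"
begin

text \<open>A bipartite graph is given by two finite vertex sets V1, V2 (kept as separate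
  sorts: V1 is the first, V2 the second component of an edge) and an edge set
  E \<subseteq> V1 \<times> V2. Vertices are labelled by natural numbers (every finite graph
  is isomorphic to such a graph).\<close>

definition bip_graph :: "nat set \<Rightarrow> nat set \<Rightarrow> (nat \<times> nat) set \<Rightarrow> bool" where
  "bip_graph V1 V2 E \<longleftrightarrow> finite V1 \<and> finite V2 \<and> E \<subseteq> V1 \<times> V2"

definition deg1 :: "(nat \<times> nat) set \<Rightarrow> nat set \<Rightarrow> nat \<Rightarrow> nat" where
  "deg1 E V2 u = card {w \<in> V2. (u, w) \<in> E}"

definition deg2 :: "(nat \<times> nat) set \<Rightarrow> nat set \<Rightarrow> nat \<Rightarrow> nat" where
  "deg2 E V1 w = card {u \<in> V1. (u, w) \<in> E}"

definition realizes :: "nat set \<Rightarrow> nat set \<Rightarrow> (nat \<times> nat) set \<Rightarrow> nat list \<Rightarrow> nat list \<Rightarrow> bool" where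
  "realizes V1 V2 E P Q \<longleftrightarrow> bip_graph V1 V2 E
     \<and> image_mset (deg1 E V2) (mset_set V1) = mset P
     \<and> image_mset (deg2 E V1) (mset_set V2) = mset Q"

definition bigraphic :: "nat list \<Rightarrow> nat list \<Rightarrow> bool" where
  "bigraphic P Q \<longleftrightarrow> (\<exists>V1 V2 E. realizes V1 V2 E P Q)"

definition mirror :: "nat set \<Rightarrow> nat set \<Rightarrow> (nat \<times> nat) set \<Rightarrow> bool" where
  "mirror V1 V2 E \<longleftrightarrow> (\<exists>\<phi>. bij_betw \<phi> V1 V2 \<and>
     (\<forall>u\<in>V1. \<forall>v\<in>V1. (u, \<phi> v) \<in> E \<longleftrightarrow> (v, \<phi> u) \<in> E))"

definition mirror_bigraphic :: "nat list \<Rightarrow> bool" where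
  "mirror_bigraphic P \<longleftrightarrow> bigraphic P P \<and> (\<exists>V1 V2 E. mirror V1 V2 E \<and> realizes V1 V2 E P P)"

end

theory Submission
  imports Defs
begin

text \<open>Match the vertices of V1 bijectively with V2 by a map \<psi> preserving degrees. The
  graph then becomes a 0/1 matrix M on V1 (M u w iff u\<psi>(w) is an edge) whose row sums equal
  its column sums, and a mirror realization is exactly a symmetric 0/1 matrix with the same
  row sums. The entries where M differs from its transpose form a digraph in which every
  vertex has equal in- and out-degree, so it contains a directed cycle. Along that cycle the
  arcs are replaced alternately by symmetric pairs of ones and of zeros; for an odd cycle
  the two consecutive equal choices at the start vertex are compensated by flipping its
  diagonal entry. Row sums stay unchanged and the asymmetric part shrinks, so iterating
  yields a symmetric matrix.\<close>

lemma card_filter_diff_three: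
  fixes F G :: "'a \<Rightarrow> bool"
  assumes "finite I" and "a \<in> I" "b \<in> I" "c \<in> I"
    and "a \<noteq> b" "a \<noteq> c" "b \<noteq> c"
    and "\<And>w. w \<in> I \<Longrightarrow> w \<noteq> a \<Longrightarrow> w \<noteq> b \<Longrightarrow> w \<noteq> c \<Longrightarrow> F w = G w"
  shows "int (card {w\<in>I. F w}) = int (card {w\<in>I. G w})
     + (of_bool (F a) - of_bool (G a)) + (of_bool (F b) - of_bool (G b))
     + (of_bool (F c) - of_bool (G c))"
proof -
  have card_sum: "int (card {w\<in>I. H w}) = (\<Sum>w\<in>I. of_bool (H w))" for H :: "'a \<Rightarrow> bool"
    using \<open>finite I\<close> by (simp add: sum_of_bool_eq Int_def conj_commute)
  have "(\<Sum>w\<in>I. of_bool (F w)) - (\<Sum>w\<in>I. of_bool (G w))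
      = (\<Sum>w\<in>I. (of_bool (F w) - of_bool (G w) :: int))"
    by (simp add: sum_subtractf)
  also have "\<dots> = (\<Sum>w\<in>{a,b,c}. (of_bool (F w) - of_bool (G w) :: int))"
    using assms by (intro sum.mono_neutral_right) auto
  also have "\<dots> = (of_bool (F a) - of_bool (G a)) + (of_bool (F b) - of_bool (G b))
      + (of_bool (F c) - of_bool (G c))"
    using assms by simp
  finally show ?thesis using card_sum[of F] card_sum[of G] by linarith
qed

lemma card_filter_bij_betw:
  assumes "bij_betw \<psi> A B"
  shows "card {w\<in>A. Q (\<psi> w)} = card {y\<in>B. Q y}"
proof -
  have "bij_betw \<psi> {w\<in>A. Q (\<psi> w)} {y\<in>B. Q y}"
    using assms by (auto simp: bij_betw_def intro: inj_on_subset)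
  then show ?thesis by (rule bij_betw_same_card)
qed

lemma image_mset_eq_imp_bij_betw:
  assumes "finite A" "finite B" "image_mset f (mset_set A) = image_mset g (mset_set B)"
  shows "\<exists>h. bij_betw h A B \<and> (\<forall>a\<in>A. g (h a) = f a)"
  using assms
proof (induction A arbitrary: B rule: finite_induct)
  case empty
  then show ?case by (simp add: mset_set_empty_iff bij_betw_def)
next
  case (insert a A)
  have "f a \<in># image_mset g (mset_set B)" using insert.prems insert.hyps by (metis image_eqI
      elem_mset_set finite_insert image_mset_add_mset insertI1 mset_set.insert union_single_eq_member)
  then obtain b where b: "b \<in> B" "g b = f a" using insert.prems by auto
  have "mset_set B = add_mset b (mset_set (B - {b}))"
    using b insert.prems by (simp add: mset_set.remove)
  then have "image_mset f (mset_set A) = image_mset g (mset_set (B - {b}))"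
    using insert.prems(2) insert.hyps b by simp
  then obtain h where h: "bij_betw h A (B - {b})" "\<forall>a\<in>A. g (h a) = f a"
    using insert.IH insert.prems by blast
  have "bij_betw (h(a := b)) A (B - {b})"
    using h(1) insert.hyps by (metis bij_betw_cong fun_upd_other)
  then have "bij_betw (h(a := b)) (insert a A) (insert b (B - {b}))"
    using insert.hyps notIn_Un_bij_betw3[of a A "h(a := b)" "B - {b}"] by simp
  moreover have "insert b (B - {b}) = B" using b by auto
  ultimately show ?case using h(2) b insert.hyps by (metis fun_upd_other fun_upd_same insertE)
qed

lemma finite_relation_has_cycle:
  fixes R :: "'a \<Rightarrow> 'a \<Rightarrow> bool"
  assumes "finite I"
    and in_I: "\<And>x y. R x y \<Longrightarrow> y \<in> I"
    and continues: "\<And>x z. R z x \<Longrightarrow> \<exists>y. R x y"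
    and "R x0 y0"
  shows "\<exists>v p. p > 0 \<and> (\<forall>t. R (v t) (v (Suc t))) \<and> (\<forall>t. v (t mod p) = v t) \<and> inj_on v {..<p}"
proof -
  define f where "f y = (SOME z. R y z)" for y
  have f_step: "R y (f y)" if "\<exists>z. R y z" for y
    unfolding f_def using that by (rule someI_ex)
  have walk: "R ((f ^^ n) x0) ((f ^^ Suc n) x0)" for n
  proof (induction n)
    case 0 show ?case using f_step \<open>R x0 y0\<close> by auto
  next
    case (Suc n) then show ?case using f_step continues by (metis funpow.simps(2) comp_apply)
  qed
  have "\<not> inj_on (\<lambda>n. (f ^^ Suc n) x0) {..card I}"
  proof
    assume "inj_on (\<lambda>n. (f ^^ Suc n) x0) {..card I}"
    then have "card ((\<lambda>n. (f ^^ Suc n) x0) ` {..card I}) = Suc (card I)" by (simp add: card_image)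
    moreover have "(\<lambda>n. (f ^^ Suc n) x0) ` {..card I} \<subseteq> I" using walk in_I by blast
    ultimately show False using card_mono[OF \<open>finite I\<close>] by (metis Suc_n_not_le_n)
  qed
  then obtain i j where "i < j" and repeat: "(f ^^ Suc i) x0 = (f ^^ Suc j) x0"
    unfolding inj_on_def by (metis linorder_neqE_nat)
  define c where "c = (f ^^ Suc i) x0"
  have iterate: "(f ^^ t) c = (f ^^ Suc (i + t)) x0" for t
  proof -
    have "(f ^^ t) c = (f ^^ (t + Suc i)) x0" unfolding c_def funpow_add by simp
    then show ?thesis by (simp add: add.commute)
  qed
  have "(f ^^ (j - i)) c = c" using \<open>i < j\<close> iterate[of "j - i"] repeat by (simp add: c_def)
  define p where "p = (LEAST p. 0 < p \<and> (f ^^ p) c = c)"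
  have p: "0 < p" "(f ^^ p) c = c"
    using LeastI[of "\<lambda>p. 0 < p \<and> (f ^^ p) c = c" "j - i"] \<open>i < j\<close> \<open>(f ^^ (j - i)) c = c\<close>
    unfolding p_def by auto
  have p_least: "p \<le> q" if "0 < q" "(f ^^ q) c = c" for q
    unfolding p_def using that by (intro Least_le) auto
  define v where "v t = (f ^^ t) c" for t
  have "v s \<noteq> v t" if "s < t" "t < p" for s t
  proof
    assume "v s = v t"
    have "(f ^^ (p - t + s)) c = (f ^^ (p - t)) (v t)"
      using \<open>v s = v t\<close> by (simp add: v_def funpow_add)
    also have "\<dots> = (f ^^ (p - t + t)) c" by (simp add: v_def funpow_add)
    also have "\<dots> = c" using p(2) \<open>t < p\<close> by simp
    finally show False using p_least[of "p - t + s"] that by simp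
  qed
  then have "inj_on v {..<p}"
    by (intro inj_onI) (metis lessThan_iff linorder_neqE_nat)
  moreover have "v (t mod p) = v t" for t
    unfolding v_def by (rule funpow_mod_eq) (use p in auto)
  moreover have "R (v t) (v (Suc t))" for t
    using walk[of "Suc (i + t)"] iterate[of t] iterate[of "Suc t"] by (simp add: v_def)
  ultimately show ?thesis using p(1) by blast
qed

definition balanced :: "'a set \<Rightarrow> ('a \<Rightarrow> 'a \<Rightarrow> bool) \<Rightarrow> bool" where
  "balanced I M \<longleftrightarrow> (\<forall>u\<in>I. card {w\<in>I. M u w} = card {w\<in>I. M w u})"

definition asym_pairs :: "'a set \<Rightarrow> ('a \<Rightarrow> 'a \<Rightarrow> bool) \<Rightarrow> ('a \<times> 'a) set" where
  "asym_pairs I M = {(a, b). a \<in> I \<and> b \<in> I \<and> M a b \<and> \<not> M b a}"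

lemma balanced_asym_pairs_continue:
  assumes "finite I" "balanced I M" "(z, x) \<in> asym_pairs I M"
  shows "\<exists>y. (x, y) \<in> asym_pairs I M"
proof (rule ccontr)
  assume "\<nexists>y. (x, y) \<in> asym_pairs I M"
  then have "{w\<in>I. M x w} \<subset> {w\<in>I. M w x}"
    using assms(3) by (auto simp: asym_pairs_def)
  then have "card {w\<in>I. M x w} < card {w\<in>I. M w x}"
    using \<open>finite I\<close> by (intro psubset_card_mono) auto
  then show False using assms(2,3) by (auto simp: balanced_def asym_pairs_def)
qed

lemma parity_correction:
  assumes "p > 0"
  shows "of_bool (even (s mod p) = b) + of_bool (even (Suc s mod p) = b) - 1
     + (if odd p \<and> Suc s mod p = 0 then (if b then -1 else 1) else 0) = (0::int)"
proof (cases "Suc (s mod p) = p")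
  case True
  then have "Suc s mod p = 0" "s mod p = p - 1" by (simp_all add: mod_Suc)
  then show ?thesis using assms True by (cases b) auto
next
  case False
  then have "Suc s mod p = Suc (s mod p)" by (simp add: mod_Suc)
  then show ?thesis by (cases b) auto
qed

locale asym_cycle =
  fixes I :: "'a set" and M :: "'a \<Rightarrow> 'a \<Rightarrow> bool" and v :: "nat \<Rightarrow> 'a" and p :: nat
  assumes finite_I: "finite I"
    and arc: "(v t, v (Suc t)) \<in> asym_pairs I M"
    and periodic: "v (t mod p) = v t"
    and inj: "inj_on v {..<p}"
    and period_pos: "p > 0"
begin

lemma v_in: "v t \<in> I"
  using arc[of t] by (simp add: asym_pairs_def)

lemma v_eq_iff: "v s = v t \<longleftrightarrow> s mod p = t mod p"
  using inj period_pos by (metis inj_on_eq_iff lessThan_iff mod_less_divisor periodic)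

lemma v_Suc_eq_iff: "v (Suc s) = v (Suc t) \<longleftrightarrow> v s = v t"
  unfolding v_eq_iff by (metis Zero_not_Suc mod_Suc nat.inject)

lemma arc_not_reversed: "\<not> (v s = v (Suc t) \<and> v (Suc s) = v t)"
  using arc[of s] arc[of t] by (auto simp: asym_pairs_def)

lemma no_loop: "v t \<noteq> v (Suc t)"
  using arc[of t] by (auto simp: asym_pairs_def)

definition on_cycle :: "'a \<Rightarrow> 'a \<Rightarrow> bool" where
  "on_cycle a c \<longleftrightarrow> (\<exists>t. a = v t \<and> c = v (Suc t) \<or> a = v (Suc t) \<and> c = v t)"

text \<open>The arc from v t to v (Suc t) becomes a symmetric pair of ones if keep t, and of zeros
  otherwise. The parity is aligned with the diagonal entry at v 0 so that, for odd p,
  flipping that entry compensates the two equal choices meeting at v 0.\<close>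

definition keep :: "nat \<Rightarrow> bool" where
  "keep t \<longleftrightarrow> (even (t mod p) \<longleftrightarrow> M (v 0) (v 0))"

definition rewired :: "'a \<Rightarrow> 'a \<Rightarrow> bool" where
  "rewired a c = (if on_cycle a c
      then (\<exists>t. keep t \<and> (a = v t \<and> c = v (Suc t) \<or> a = v (Suc t) \<and> c = v t))
      else if odd p \<and> a = v 0 \<and> c = v 0 then \<not> M a c else M a c)"

lemma on_cycle_sym: "on_cycle a c \<longleftrightarrow> on_cycle c a"
  unfolding on_cycle_def by blast

lemma keep_arc_iff:
  "(\<exists>t. keep t \<and> (v s = v t \<and> v (Suc s) = v (Suc t) \<or> v s = v (Suc t) \<and> v (Suc s) = v t))
    \<longleftrightarrow> keep s"
proof
  assume "\<exists>t. keep t \<and> (v s = v t \<and> v (Suc s) = v (Suc t) \<or> v s = v (Suc t) \<and> v (Suc s) = v t)"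
  then obtain t where "keep t" "v s = v t"
    using arc_not_reversed by blast
  then show "keep s" by (simp add: keep_def v_eq_iff)
qed blast

lemma rewired_arc: "rewired (v s) (v (Suc s)) = keep s" "rewired (v (Suc s)) (v s) = keep s"
proof -
  have "on_cycle (v s) (v (Suc s))" unfolding on_cycle_def by blast
  then show "rewired (v s) (v (Suc s)) = keep s" "rewired (v (Suc s)) (v s) = keep s"
    unfolding rewired_def using on_cycle_sym keep_arc_iff[of s] by (simp_all only: if_True) blast+
qed

lemma rewired_diag: "rewired (v s) (v s) \<longleftrightarrow> (if odd p \<and> s mod p = 0 then \<not> M (v s) (v s) else M (v s) (v s))"
proof -
  have "\<not> on_cycle (v s) (v s)" unfolding on_cycle_def using no_loop by metis
  then show ?thesis unfolding rewired_def by (simp add: v_eq_iff[of s 0])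
qed

lemma rewired_off_cycle: "\<not> on_cycle a c \<Longrightarrow> a \<noteq> c \<Longrightarrow> rewired a c = M a c"
  unfolding rewired_def by auto

lemma not_on_cycle:
  assumes "w \<noteq> v s" "w \<noteq> v (Suc (Suc s))"
  shows "\<not> on_cycle (v (Suc s)) w"
proof
  assume "on_cycle (v (Suc s)) w"
  then obtain t where "v (Suc s) = v t \<and> w = v (Suc t) \<or> v (Suc s) = v (Suc t) \<and> w = v t"
    unfolding on_cycle_def by blast
  then show False
    using assms v_Suc_eq_iff[of s t] v_Suc_eq_iff[of "Suc s" t] by auto
qed

lemma rewired_degrees_on_cycle:
  "card {w\<in>I. rewired (v (Suc s)) w} = card {w\<in>I. M (v (Suc s)) w}"
  "card {w\<in>I. rewired w (v (Suc s))} = card {w\<in>I. M w (v (Suc s))}"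
proof -
  define a u c where "a = v s" and "u = v (Suc s)" and "c = v (Suc (Suc s))"
  have distinct: "a \<noteq> u" "a \<noteq> c" "u \<noteq> c"
    using no_loop arc_not_reversed by (auto simp: a_def u_def c_def)
  have in_I: "a \<in> I" "u \<in> I" "c \<in> I" using v_in by (auto simp: a_def u_def c_def)
  have off: "rewired u w = M u w" "rewired w u = M w u" if "w \<noteq> a" "w \<noteq> u" "w \<noteq> c" for w
    using that not_on_cycle[of w s] on_cycle_sym rewired_off_cycle by (auto simp: a_def u_def c_def)
  have arcs: "rewired u a = keep s" "rewired a u = keep s"
      "rewired u c = keep (Suc s)" "rewired c u = keep (Suc s)"
    using rewired_arc[of s] rewired_arc[of "Suc s"] by (simp_all add: a_def u_def c_def)
  have M_arcs: "\<not> M u a" "M u c" "M a u" "\<not> M c u"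
    using arc[of s] arc[of "Suc s"] by (auto simp: asym_pairs_def a_def u_def c_def)
  have diag: "(of_bool (rewired u u) - of_bool (M u u) :: int)
      = (if odd p \<and> Suc s mod p = 0 then (if M (v 0) (v 0) then -1 else 1) else 0)"
    using rewired_diag[of "Suc s"] v_eq_iff[of "Suc s" 0] by (auto simp: a_def u_def c_def)
  have balance: "of_bool (keep s) + of_bool (keep (Suc s)) - 1
      + (if odd p \<and> Suc s mod p = 0 then (if M (v 0) (v 0) then -1 else 1) else 0) = (0::int)"
    unfolding keep_def by (rule parity_correction[OF period_pos])
  have "int (card {w\<in>I. rewired u w}) = int (card {w\<in>I. M u w})
      + (of_bool (rewired u a) - of_bool (M u a)) + (of_bool (rewired u u) - of_bool (M u u))
      + (of_bool (rewired u c) - of_bool (M u c))"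
    by (rule card_filter_diff_three[OF finite_I in_I distinct]) (simp add: off)
  then show "card {w\<in>I. rewired (v (Suc s)) w} = card {w\<in>I. M (v (Suc s)) w}"
    using diag balance unfolding arcs u_def[symmetric] by (simp add: M_arcs)
  have "int (card {w\<in>I. rewired w u}) = int (card {w\<in>I. M w u})
      + (of_bool (rewired a u) - of_bool (M a u)) + (of_bool (rewired u u) - of_bool (M u u))
      + (of_bool (rewired c u) - of_bool (M c u))"
    by (rule card_filter_diff_three[OF finite_I in_I distinct]) (simp add: off)
  then show "card {w\<in>I. rewired w (v (Suc s))} = card {w\<in>I. M w (v (Suc s))}"
    using diag balance unfolding arcs u_def[symmetric] by (simp add: M_arcs)
qed

lemma rewired_same_degrees:
  "card {w\<in>I. rewired u w} = card {w\<in>I. M u w}"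
  "card {w\<in>I. rewired w u} = card {w\<in>I. M w u}"
proof -
  consider s where "u = v (Suc s)" | "u \<notin> range v"
    using periodic period_pos by (metis Suc_diff_1 add_gr_0 mod_add_self2 rangeE)
  then have "card {w\<in>I. rewired u w} = card {w\<in>I. M u w} \<and>
      card {w\<in>I. rewired w u} = card {w\<in>I. M w u}"
  proof cases
    case 1
    then show ?thesis using rewired_degrees_on_cycle by simp
  next
    case 2
    then have "\<not> on_cycle u w \<and> \<not> on_cycle w u" for w by (auto simp: on_cycle_def)
    then have "rewired u w = M u w \<and> rewired w u = M w u" for w
      using 2 rewired_def by auto
    then show ?thesis by simp
  qed
  then show "card {w\<in>I. rewired u w} = card {w\<in>I. M u w}"
    "card {w\<in>I. rewired w u} = card {w\<in>I. M w u}" by simp_all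
qed

lemma asym_pairs_rewired: "asym_pairs I rewired \<subset> asym_pairs I M"
proof
  show "asym_pairs I rewired \<subseteq> asym_pairs I M"
  proof
    fix z assume z: "z \<in> asym_pairs I rewired"
    then obtain a c where ac: "z = (a, c)" "a \<in> I" "c \<in> I" "rewired a c" "\<not> rewired c a"
      by (auto simp: asym_pairs_def)
    then have "\<not> on_cycle a c"
      using rewired_arc unfolding on_cycle_def by metis
    then show "z \<in> asym_pairs I M"
      using ac on_cycle_sym rewired_off_cycle[of a c] rewired_off_cycle[of c a]
      by (auto simp: asym_pairs_def)
  qed
  show "asym_pairs I rewired \<noteq> asym_pairs I M"
    using arc[of 0] rewired_arc[of 0] by (auto simp: asym_pairs_def)
qed

end

lemma balanced_reduce_asym_pairs:
  assumes "finite I" "balanced I M" "asym_pairs I M \<noteq> {}"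
  obtains N where "balanced I N" "\<forall>u\<in>I. card {w\<in>I. N u w} = card {w\<in>I. M u w}"
    "asym_pairs I N \<subset> asym_pairs I M"
proof -
  obtain x0 y0 where "(x0, y0) \<in> asym_pairs I M" using assms(3) by auto
  moreover have "y \<in> I" if "(x, y) \<in> asym_pairs I M" for x y
    using that by (simp add: asym_pairs_def)
  ultimately obtain v p where "p > 0" "\<forall>t. (v t, v (Suc t)) \<in> asym_pairs I M"
      "\<forall>t. v (t mod p) = v t" "inj_on v {..<p}"
    using finite_relation_has_cycle[OF assms(1), of "\<lambda>x y. (x, y) \<in> asym_pairs I M"]
      balanced_asym_pairs_continue[OF assms(1,2)] by metis
  then interpret asym_cycle I M v p using assms(1) by unfold_locales auto
  have "balanced I rewired"
    using assms(2) rewired_same_degrees unfolding balanced_def by metis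
  then show ?thesis using that rewired_same_degrees(1) asym_pairs_rewired by blast
qed

lemma balanced_imp_symmetric:
  assumes "finite I" "balanced I M"
  shows "\<exists>N. (\<forall>u\<in>I. \<forall>w\<in>I. N u w = N w u) \<and> (\<forall>u\<in>I. card {w\<in>I. N u w} = card {w\<in>I. M u w})"
  using assms
proof (induction "card (asym_pairs I M)" arbitrary: M rule: less_induct)
  case less
  show ?case
  proof (cases "asym_pairs I M = {}")
    case True
    then have "\<forall>u\<in>I. \<forall>w\<in>I. M u w = M w u" by (auto simp: asym_pairs_def)
    then show ?thesis by blast
  next
    case False
    then obtain N where N: "balanced I N" "\<forall>u\<in>I. card {w\<in>I. N u w} = card {w\<in>I. M u w}"
      "asym_pairs I N \<subset> asym_pairs I M"
      using balanced_reduce_asym_pairs less.prems by blast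
    have "asym_pairs I M \<subseteq> I \<times> I" by (auto simp: asym_pairs_def)
    then have "finite (asym_pairs I M)" using less.prems(1) by (auto intro: finite_subset)
    then have "card (asym_pairs I N) < card (asym_pairs I M)"
      using N(3) by (simp add: psubset_card_mono)
    then obtain N' where "\<forall>u\<in>I. \<forall>w\<in>I. N' u w = N' w u"
        "\<forall>u\<in>I. card {w\<in>I. N' u w} = card {w\<in>I. N u w}"
      using less.hyps less.prems(1) N(1) by blast
    then show ?thesis using N(2) by auto
  qed
qed

definition matrix_graph :: "(nat \<Rightarrow> nat) \<Rightarrow> nat set \<Rightarrow> (nat \<Rightarrow> nat \<Rightarrow> bool) \<Rightarrow> (nat \<times> nat) set" where
  "matrix_graph \<psi> V N = {(u, \<psi> w) | u w. u \<in> V \<and> w \<in> V \<and> N u w}"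

context
  fixes \<psi> :: "nat \<Rightarrow> nat" and V1 V2 :: "nat set"
  assumes \<psi>: "bij_betw \<psi> V1 V2"
begin

lemma matrix_graph_mem:
  assumes "u \<in> V1" "w \<in> V1"
  shows "(u, \<psi> w) \<in> matrix_graph \<psi> V1 N \<longleftrightarrow> N u w"
proof
  assume "(u, \<psi> w) \<in> matrix_graph \<psi> V1 N"
  then obtain w' where "\<psi> w = \<psi> w'" "w' \<in> V1" "N u w'"
    unfolding matrix_graph_def by blast
  moreover have "inj_on \<psi> V1" using \<psi> by (rule bij_betw_imp_inj_on)
  ultimately show "N u w" using assms(2) by (metis inj_onD)
qed (use assms in \<open>auto simp: matrix_graph_def\<close>)

lemma matrix_graph_subset: "matrix_graph \<psi> V1 N \<subseteq> V1 \<times> V2"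
  using bij_betw_imp_surj_on[OF \<psi>] unfolding matrix_graph_def by blast

lemma deg1_matrix_graph:
  assumes "u \<in> V1"
  shows "deg1 (matrix_graph \<psi> V1 N) V2 u = card {w\<in>V1. N u w}"
proof -
  have "deg1 (matrix_graph \<psi> V1 N) V2 u = card {w\<in>V1. (u, \<psi> w) \<in> matrix_graph \<psi> V1 N}"
    unfolding deg1_def by (rule card_filter_bij_betw[OF \<psi>, symmetric])
  also have "\<dots> = card {w\<in>V1. N u w}"
    by (intro arg_cong[where f = card] Collect_cong) (use matrix_graph_mem assms in blast)
  finally show ?thesis .
qed

lemma deg2_matrix_graph:
  assumes "w \<in> V1"
  shows "deg2 (matrix_graph \<psi> V1 N) V1 (\<psi> w) = card {u\<in>V1. N u w}"
  unfolding deg2_def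
  by (intro arg_cong[where f = card] Collect_cong) (use matrix_graph_mem assms in blast)

lemma matrix_graph_of_graph:
  assumes "E \<subseteq> V1 \<times> V2"
  shows "matrix_graph \<psi> V1 (\<lambda>u w. (u, \<psi> w) \<in> E) = E"
proof
  show "matrix_graph \<psi> V1 (\<lambda>u w. (u, \<psi> w) \<in> E) \<subseteq> E"
    unfolding matrix_graph_def by blast
  show "E \<subseteq> matrix_graph \<psi> V1 (\<lambda>u w. (u, \<psi> w) \<in> E)"
  proof
    fix e assume "e \<in> E"
    then obtain u y where "e = (u, y)" "u \<in> V1" "y \<in> V2" using assms by blast
    moreover obtain w where "w \<in> V1" "y = \<psi> w"
      using \<open>y \<in> V2\<close> bij_betw_imp_surj_on[OF \<psi>] by blast
    ultimately show "e \<in> matrix_graph \<psi> V1 (\<lambda>u w. (u, \<psi> w) \<in> E)"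
      using \<open>e \<in> E\<close> unfolding matrix_graph_def by blast
  qed
qed

lemma mirror_matrix_graph:
  assumes "\<forall>u\<in>V1. \<forall>w\<in>V1. N u w = N w u"
  shows "mirror V1 V2 (matrix_graph \<psi> V1 N)"
proof -
  have "(u, \<psi> w) \<in> matrix_graph \<psi> V1 N \<longleftrightarrow> (w, \<psi> u) \<in> matrix_graph \<psi> V1 N"
    if "u \<in> V1" "w \<in> V1" for u w
    using that assms by (simp add: matrix_graph_mem)
  then show ?thesis unfolding mirror_def using \<psi> by blast
qed

end

lemma realizes_imp_mirror_realizes:
  assumes "realizes V1 V2 E P P"
  shows "\<exists>E'. mirror V1 V2 E' \<and> realizes V1 V2 E' P P"
proof -
  have fin: "finite V1" "finite V2" and E: "E \<subseteq> V1 \<times> V2"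
    and deg: "image_mset (deg1 E V2) (mset_set V1) = mset P" "image_mset (deg2 E V1) (mset_set V2) = mset P"
    using assms by (auto simp: realizes_def bip_graph_def)
  obtain \<psi> where \<psi>: "bij_betw \<psi> V1 V2" and \<psi>_deg: "\<forall>a\<in>V1. deg2 E V1 (\<psi> a) = deg1 E V2 a"
    using image_mset_eq_imp_bij_betw[OF fin] deg by metis
  define M where "M = (\<lambda>u w. (u, \<psi> w) \<in> E)"
  have E_eq: "E = matrix_graph \<psi> V1 M"
    using matrix_graph_of_graph[OF \<psi> E] by (simp add: M_def)
  have "balanced V1 M"
    using \<psi>_deg deg1_matrix_graph[OF \<psi>] deg2_matrix_graph[OF \<psi>] by (simp add: balanced_def E_eq)
  then obtain N where sym: "\<forall>u\<in>V1. \<forall>w\<in>V1. N u w = N w u"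
    and rows: "\<forall>u\<in>V1. card {w\<in>V1. N u w} = card {w\<in>V1. M u w}"
    using balanced_imp_symmetric[OF fin(1)] by blast
  define E' where "E' = matrix_graph \<psi> V1 N"
  have deg1_eq: "deg1 E' V2 u = deg1 E V2 u" if "u \<in> V1" for u
    using that rows deg1_matrix_graph[OF \<psi>] by (simp add: E'_def E_eq)
  moreover have "deg2 E' V1 (\<psi> w) = deg2 E V1 (\<psi> w)" if "w \<in> V1" for w
  proof -
    have "{u\<in>V1. N u w} = {u\<in>V1. N w u}" using sym that by auto
    then show ?thesis
      using that rows \<psi>_deg deg1_matrix_graph[OF \<psi>] deg2_matrix_graph[OF \<psi>]
      by (simp add: E'_def E_eq)
  qed
  then have deg2_eq: "deg2 E' V1 y = deg2 E V1 y" if "y \<in> V2" for y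
    using that \<psi> by (auto simp: bij_betw_def)
  have "image_mset (deg1 E' V2) (mset_set V1) = mset P"
    using deg(1) deg1_eq fin(1) by (metis elem_mset_set image_mset_cong)
  moreover have "image_mset (deg2 E' V1) (mset_set V2) = mset P"
    using deg(2) deg2_eq fin(2) by (metis elem_mset_set image_mset_cong)
  ultimately have "realizes V1 V2 E' P P"
    using fin matrix_graph_subset[OF \<psi>] by (simp add: realizes_def bip_graph_def E'_def)
  then show ?thesis using mirror_matrix_graph[OF \<psi> sym] by (auto simp: E'_def)
qed

theorem theorem1:
  fixes P :: "nat list"
  shows "mirror_bigraphic P \<longleftrightarrow> bigraphic P P"
  using realizes_imp_mirror_realizes unfolding mirror_bigraphic_def bigraphic_def by blast

end
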